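(* Let $f\in\mathcal H$, $f\neq 0$, and let $d=\operatorname{ord}_0(f)$. Then $f$ is $\mathcal H$-inner if and only if $f=c\,\Pi_{[f]}\big(k_0^{(d)}\big)$ for some nonzero constant $c\in\mathbb C$. Moreover, $\Pi_{[f]}\big(k_0^{(d)}\big)$ is always an $\mathcal H$-inner function.
   Context: Standing assumptions: $\Omega\subset\mathbb C$ is a domain with $0\in\Omega$, and $\mathcal H$ is a Hilbert space of analytic functions on $\Omega$ in which every point evaluation $f\mapsto f(w)$, $w\in\Omega$, is bounded (a reproducing kernel Hilbert space); the shift $S$, $(Sf)(z)=zf(z)$, is a bounded operator on $\mathcal H$; and the analytic polynomials $\mathcal P$ are dense in $\mathcal H$. For $w\in\Omega$ and $m\ge 0$, $k_w^{(m)}$ denotes the unique element of $\mathcal H$ with $\langle f,k_w^{(m)}\rangle=f^{(m)}(w)$ for all $f\in\mathcal H$, and $k_w=k_w^{(0)}$. For $f\in\mathcal H$, $[f]$ denotes the closure in $\mathcal H$ of $\operatorname{span}\{z^kf:k\ge0\}$. For a closed subspace $V$, $\Pi_V$ is the orthogonal projection onto $V$. $\operatorname{ord}_0(f)$ is the order of the zero of $f$ at $0$. A function $f\in\mathcal H\setminus\{0\}$ is called $\mathcal H$-inner if $\langle f,z^kf\rangle=0$ for all integers $k\ge1$ (no normalization required). *)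

theory Defs
  imports "HOL-Analysis.Analysis" "HOL-Computational_Algebra.Polynomial" "HOL-Library.Function_Algebras"
begin

type_synonym cfun = "complex \<Rightarrow> complex"

text \<open>Elements of the Hilbert space are analytic functions on the domain,
  represented canonically by extending them by 0 outside the domain.\<close>

definition hnorm :: "(cfun \<Rightarrow> cfun \<Rightarrow> complex) \<Rightarrow> cfun \<Rightarrow> real" where
  "hnorm ip f = sqrt (Re (ip f f))"

definition smul :: "complex \<Rightarrow> cfun \<Rightarrow> cfun" where
  "smul c f = (\<lambda>z. c * f z)"

definition shift :: "cfun \<Rightarrow> cfun" where
  "shift f = (\<lambda>z. z * f z)"

definition polyOn :: "complex set \<Rightarrow> complex poly \<Rightarrow> cfun" where
  "polyOn \<Omega> p = (\<lambda>z. if z \<in> \<Omega> then poly p z else 0)"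

definition rkhs_setting ::
  "complex set \<Rightarrow> cfun set \<Rightarrow> (cfun \<Rightarrow> cfun \<Rightarrow> complex) \<Rightarrow> bool" where
  "rkhs_setting \<Omega> H ip \<longleftrightarrow>
     \<comment> \<open>domain containing 0\<close>
     open \<Omega> \<and> connected \<Omega> \<and> 0 \<in> \<Omega> \<and>
     \<comment> \<open>space of analytic functions on the domain\<close>
     (\<forall>f\<in>H. f holomorphic_on \<Omega> \<and> (\<forall>z. z \<notin> \<Omega> \<longrightarrow> f z = 0)) \<and>
     \<comment> \<open>complex vector space\<close>
     (0::cfun) \<in> H \<and> (\<forall>f\<in>H. \<forall>g\<in>H. f + g \<in> H) \<and> (\<forall>c. \<forall>f\<in>H. smul c f \<in> H) \<and>
     \<comment> \<open>inner product\<close>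
     (\<forall>f\<in>H. \<forall>g\<in>H. \<forall>h\<in>H. ip (f + g) h = ip f h + ip g h) \<and>
     (\<forall>c. \<forall>f\<in>H. \<forall>g\<in>H. ip (smul c f) g = c * ip f g) \<and>
     (\<forall>f\<in>H. \<forall>g\<in>H. ip g f = cnj (ip f g)) \<and>
     (\<forall>f\<in>H. Re (ip f f) \<ge> 0) \<and>
     (\<forall>f\<in>H. ip f f = 0 \<longrightarrow> f = 0) \<and>
     \<comment> \<open>completeness\<close>
     (\<forall>X. (\<forall>n. X n \<in> H) \<and> (\<forall>e>0. \<exists>N. \<forall>m\<ge>N. \<forall>n\<ge>N. hnorm ip (X m - X n) < e)
          \<longrightarrow> (\<exists>g\<in>H. (\<lambda>n. hnorm ip (X n - g)) \<longlonglongrightarrow> 0)) \<and>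
     \<comment> \<open>bounded point evaluations\<close>
     (\<forall>w\<in>\<Omega>. \<exists>C. \<forall>f\<in>H. norm (f w) \<le> C * hnorm ip f) \<and>
     \<comment> \<open>bounded shift\<close>
     (\<forall>f\<in>H. shift f \<in> H) \<and> (\<exists>C. \<forall>f\<in>H. hnorm ip (shift f) \<le> C * hnorm ip f) \<and>
     \<comment> \<open>polynomials belong to H and are dense\<close>
     (\<forall>p. polyOn \<Omega> p \<in> H) \<and>
     (\<forall>f\<in>H. \<forall>e>0. \<exists>p. hnorm ip (f - polyOn \<Omega> p) < e)"

definition rkernel :: "cfun set \<Rightarrow> (cfun \<Rightarrow> cfun \<Rightarrow> complex) \<Rightarrow> nat \<Rightarrow> complex \<Rightarrow> cfun" where
  "rkernel H ip m w = (THE k. k \<in> H \<and> (\<forall>f\<in>H. ip f k = (deriv ^^ m) f w))"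

text \<open>[f]: closure in H of span of z^k f (k \<ge> 0), i.e. of the polynomial multiples of f.\<close>
definition cyclic :: "cfun set \<Rightarrow> (cfun \<Rightarrow> cfun \<Rightarrow> complex) \<Rightarrow> cfun \<Rightarrow> cfun set" where
  "cyclic H ip f = {g \<in> H. \<forall>e>0. \<exists>p. hnorm ip (g - (\<lambda>z. poly p z * f z)) < e}"

definition proj :: "(cfun \<Rightarrow> cfun \<Rightarrow> complex) \<Rightarrow> cfun set \<Rightarrow> cfun \<Rightarrow> cfun" where
  "proj ip V x = (THE y. y \<in> V \<and> (\<forall>v\<in>V. ip (x - y) v = 0))"

definition ord0 :: "cfun \<Rightarrow> nat" where
  "ord0 f = (LEAST n. (deriv ^^ n) f 0 \<noteq> 0)"

definition H_inner :: "cfun set \<Rightarrow> (cfun \<Rightarrow> cfun \<Rightarrow> complex) \<Rightarrow> cfun \<Rightarrow> bool" where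
  "H_inner H ip f \<longleftrightarrow> f \<in> H \<and> f \<noteq> 0 \<and> (\<forall>k::nat. k \<ge> 1 \<longrightarrow> ip f (\<lambda>z. z ^ k * f z) = 0)"

end

(*
  Write d = ord0 f, V = [f] and g = P_V k_0^(d).  For v in V the reproducing property gives
  <v, g> = v^(d)(0).  Every element of V vanishes to order d at 0 (V is the closure of the
  polynomial multiples of f and v |-> v^(j)(0) is continuous), so z^k v vanishes to order d + 1
  for k >= 1 and g is orthogonal to all z^k V; in particular g is H-inner, and g /= 0 because
  <f, g> = f^(d)(0) /= 0.  Conversely, if f is H-inner, choose a with h = g - a f orthogonal to f;
  then h is orthogonal to every z^j f, hence to V, and h lies in V, so h = 0 and g = a f.

  The kernel k_0^(d) exists only because f |-> f^(d)(0) is bounded.  The bounded point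
  evaluations give this via the Baire category theorem (H is the union of the closed sets of
  functions bounded by n on a small circle around 0) and Cauchy's estimate.
*)
theory Submission
  imports Defs "HOL-Complex_Analysis.Complex_Analysis"
begin

section \<open>Vanishing order at 0\<close>

definition vanishes_to :: "nat \<Rightarrow> cfun \<Rightarrow> bool" where
  "vanishes_to d g \<longleftrightarrow> (\<forall>j<d. (deriv ^^ j) g 0 = 0)"

lemma vanishes_to_mult:
  assumes "p holomorphic_on S" "g holomorphic_on S" "open S" "0 \<in> S"
    and "vanishes_to a p" "vanishes_to b g"
  shows "vanishes_to (a + b) (\<lambda>z. p z * g z)"
  unfolding vanishes_to_def
proof (intro allI impI)
  fix j assume "j < a + b"
  have "(deriv ^^ i) p 0 = 0 \<or> (deriv ^^ (j - i)) g 0 = 0" if "i \<le> j" for i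
  proof (cases "i < a")
    case True
    then show ?thesis using assms(5) by (simp add: vanishes_to_def)
  next
    case False
    then have "j - i < b" using \<open>j < a + b\<close> \<open>i \<le> j\<close> by linarith
    then show ?thesis using assms(6) by (simp add: vanishes_to_def)
  qed
  then show "(deriv ^^ j) (\<lambda>z. p z * g z) 0 = 0"
    unfolding higher_deriv_mult[OF assms(1-4)] by (intro sum.neutral) auto
qed

lemma vanishes_to_power: "vanishes_to k (\<lambda>z. z ^ k)"
  unfolding vanishes_to_def
proof (intro allI impI)
  fix j assume "j < k"
  have "(deriv ^^ j) (\<lambda>w::complex. (w - 0) ^ k) 0 = pochhammer (of_nat (Suc k - j)) j * (0 - 0) ^ (k - j)"
    by (rule higher_deriv_power)
  then show "(deriv ^^ j) (\<lambda>z::complex. z ^ k) 0 = 0"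
    using \<open>j < k\<close> by (simp add: power_0_left)
qed

section \<open>The Hilbert space\<close>

text \<open>The clauses of \<^const>\<open>rkhs_setting\<close> that the proof uses.\<close>

locale rkhs =
  fixes \<Omega> :: "complex set" and H :: "cfun set" and ip :: "cfun \<Rightarrow> cfun \<Rightarrow> complex"
  assumes open_domain: "open \<Omega>" and connected_domain: "connected \<Omega>" and zero_in_domain: "0 \<in> \<Omega>"
    and holomorphic: "f \<in> H \<Longrightarrow> f holomorphic_on \<Omega>"
    and vanishes_outside: "f \<in> H \<Longrightarrow> z \<notin> \<Omega> \<Longrightarrow> f z = 0"
    and zero_in [simp]: "0 \<in> H"
    and add_in [simp]: "f \<in> H \<Longrightarrow> g \<in> H \<Longrightarrow> f + g \<in> H"
    and smul_in [simp]: "f \<in> H \<Longrightarrow> smul c f \<in> H"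
    and ip_add: "f \<in> H \<Longrightarrow> g \<in> H \<Longrightarrow> h \<in> H \<Longrightarrow> ip (f + g) h = ip f h + ip g h"
    and ip_smul: "f \<in> H \<Longrightarrow> g \<in> H \<Longrightarrow> ip (smul c f) g = c * ip f g"
    and ip_commute: "f \<in> H \<Longrightarrow> g \<in> H \<Longrightarrow> ip g f = cnj (ip f g)"
    and ip_self_nonneg: "f \<in> H \<Longrightarrow> Re (ip f f) \<ge> 0"
    and ip_self_eq_0: "f \<in> H \<Longrightarrow> ip f f = 0 \<Longrightarrow> f = 0"
    and complete: "\<lbrakk>\<And>n. X n \<in> H;
        \<And>e. e > 0 \<Longrightarrow> \<exists>N. \<forall>m\<ge>N. \<forall>n\<ge>N. hnorm ip (X m - X n) < e\<rbrakk>
        \<Longrightarrow> \<exists>g\<in>H. (\<lambda>n. hnorm ip (X n - g)) \<longlonglongrightarrow> 0"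
    and eval_bounded: "w \<in> \<Omega> \<Longrightarrow> \<exists>C. \<forall>f\<in>H. norm (f w) \<le> C * hnorm ip f"
    and shift_in [simp]: "f \<in> H \<Longrightarrow> shift f \<in> H"
    and shift_bounded: "\<exists>C. \<forall>f\<in>H. hnorm ip (shift f) \<le> C * hnorm ip f"

lemma rkhs_setting_imp_rkhs: "rkhs_setting \<Omega> H ip \<Longrightarrow> rkhs \<Omega> H ip"
  unfolding rkhs_setting_def rkhs_def by (elim conjE, intro conjI) (blast | metis)+

context rkhs
begin

lemma smul_minus_one: "smul (-1) f = - f"
  by (simp add: smul_def fun_eq_iff)

lemma uminus_in [simp]: "f \<in> H \<Longrightarrow> - f \<in> H"
  by (metis smul_in smul_minus_one)

lemma diff_in [simp]: "f \<in> H \<Longrightarrow> g \<in> H \<Longrightarrow> f - g \<in> H"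
  by (metis add_in uminus_in diff_conv_add_uminus)

lemma ip_zero_left [simp]: "g \<in> H \<Longrightarrow> ip 0 g = 0"
  using ip_smul[of g g 0] by (simp add: smul_def zero_fun_def)

lemma ip_diff: "f \<in> H \<Longrightarrow> g \<in> H \<Longrightarrow> h \<in> H \<Longrightarrow> ip (f - g) h = ip f h - ip g h"
  using ip_add[of f "- g" h] ip_smul[of g h "-1"] by (simp add: smul_minus_one)

lemma ip_add_right: "f \<in> H \<Longrightarrow> g \<in> H \<Longrightarrow> h \<in> H \<Longrightarrow> ip h (f + g) = ip h f + ip h g"
  by (metis add_in complex_cnj_add ip_add ip_commute)

lemma ip_smul_right: "f \<in> H \<Longrightarrow> g \<in> H \<Longrightarrow> ip g (smul c f) = cnj c * ip g f"
  by (metis smul_in complex_cnj_mult complex_cnj_cnj ip_smul ip_commute)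

lemma ip_diff_right: "f \<in> H \<Longrightarrow> g \<in> H \<Longrightarrow> h \<in> H \<Longrightarrow> ip h (f - g) = ip h f - ip h g"
  by (metis diff_in complex_cnj_diff ip_diff ip_commute)

lemma ip_zero_right [simp]: "g \<in> H \<Longrightarrow> ip g 0 = 0"
  by (metis zero_in complex_cnj_zero ip_commute ip_zero_left)

lemma hnorm_nonneg [simp]: "f \<in> H \<Longrightarrow> hnorm ip f \<ge> 0"
  by (simp add: hnorm_def ip_self_nonneg)

lemma hnorm_zero [simp]: "hnorm ip 0 = 0"
  by (simp add: hnorm_def)

lemma hnorm_sq: "f \<in> H \<Longrightarrow> (hnorm ip f)\<^sup>2 = Re (ip f f)"
  by (simp add: hnorm_def ip_self_nonneg)

lemma ip_self_real: "f \<in> H \<Longrightarrow> ip f f = of_real (Re (ip f f))"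
  using ip_commute[of f f] by (simp add: complex_eq_iff)

lemma hnorm_eq_0_iff: "f \<in> H \<Longrightarrow> hnorm ip f = 0 \<longleftrightarrow> f = 0"
  using ip_self_real[of f] hnorm_sq[of f] ip_self_eq_0[of f] by auto

lemma hnorm_pos: "f \<in> H \<Longrightarrow> f \<noteq> 0 \<Longrightarrow> hnorm ip f > 0"
  using hnorm_eq_0_iff hnorm_nonneg by (metis order_le_less)

lemma hnorm_smul: assumes f: "f \<in> H" shows "hnorm ip (smul c f) = cmod c * hnorm ip f"
proof -
  have "ip (smul c f) (smul c f) = (c * cnj c) * ip f f"
    using f by (simp add: ip_smul ip_smul_right)
  also have "\<dots> = of_real ((cmod c * hnorm ip f)\<^sup>2)"
    using ip_self_real[OF f] hnorm_sq[OF f]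
    by (metis complex_norm_square of_real_mult power_mult_distrib)
  finally have "(hnorm ip (smul c f))\<^sup>2 = (cmod c * hnorm ip f)\<^sup>2"
    using f by (simp add: hnorm_sq)
  then show ?thesis using f by (simp add: power2_eq_iff_nonneg)
qed

lemma hnorm_minus_commute: "f \<in> H \<Longrightarrow> g \<in> H \<Longrightarrow> hnorm ip (f - g) = hnorm ip (g - f)"
  using hnorm_smul[of "g - f" "-1"] by (simp add: smul_minus_one)

text \<open>The Pythagorean identity behind both Cauchy--Schwarz and the orthogonality of best
  approximations.\<close>

lemma hnorm_sq_remove_component:
  assumes z: "z \<in> H" and v: "v \<in> H" "v \<noteq> 0"
  shows "(hnorm ip (z - smul (ip z v / of_real ((hnorm ip v)\<^sup>2)) v))\<^sup>2
           = (hnorm ip z)\<^sup>2 - (cmod (ip z v))\<^sup>2 / (hnorm ip v)\<^sup>2"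
proof -
  define a where "a = (hnorm ip v)\<^sup>2"
  define b where "b = ip z v"
  define w where "w = z - smul (b / of_real a) v"
  have a: "a > 0" using hnorm_pos[OF v] by (simp add: a_def)
  have vv: "ip v v = of_real a" using ip_self_real[OF v(1)] hnorm_sq[OF v(1)] by (simp add: a_def)
  have "ip w w = ip z z - b * cnj b / of_real a"
    using z v a vv ip_commute[OF z v(1)]
    by (simp add: w_def ip_diff ip_diff_right ip_smul ip_smul_right b_def field_simps)
  also have "b * cnj b / of_real a = of_real ((cmod b)\<^sup>2 / a)"
    using complex_norm_square[of b] by simp
  finally have "Re (ip w w) = Re (ip z z) - (cmod b)\<^sup>2 / a" by simp
  then show ?thesis using z v by (simp add: hnorm_sq w_def a_def b_def)
qed

lemma cauchy_schwarz: assumes f: "f \<in> H" and g: "g \<in> H"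
  shows "cmod (ip f g) \<le> hnorm ip f * hnorm ip g"
proof (cases "g = 0")
  case False
  have "(cmod (ip f g))\<^sup>2 / (hnorm ip g)\<^sup>2 \<le> (hnorm ip f)\<^sup>2"
    using hnorm_sq_remove_component[OF f g False] by (metis diff_ge_0_iff_ge zero_le_power2)
  then have "(cmod (ip f g))\<^sup>2 \<le> (hnorm ip f * hnorm ip g)\<^sup>2"
    using hnorm_pos[OF g False] by (simp add: pos_divide_le_eq power_mult_distrib)
  then show ?thesis using f g by (meson mult_nonneg_nonneg hnorm_nonneg power2_le_imp_le)
qed (use f in simp)

lemma hnorm_triangle: assumes f: "f \<in> H" and g: "g \<in> H"
  shows "hnorm ip (f + g) \<le> hnorm ip f + hnorm ip g"
proof -
  have "(hnorm ip (f + g))\<^sup>2 = (hnorm ip f)\<^sup>2 + (hnorm ip g)\<^sup>2 + 2 * Re (ip f g)"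
    using f g ip_commute[OF f g] by (simp add: hnorm_sq ip_add ip_add_right)
  moreover have "Re (ip f g) \<le> hnorm ip f * hnorm ip g"
    using cauchy_schwarz[OF f g] complex_Re_le_cmod[of "ip f g"] by linarith
  ultimately have "(hnorm ip (f + g))\<^sup>2 \<le> (hnorm ip f + hnorm ip g)\<^sup>2"
    unfolding power2_sum by linarith
  then show ?thesis using f g by (meson add_nonneg_nonneg hnorm_nonneg power2_le_imp_le)
qed

lemma hnorm_triangle_diff: "f \<in> H \<Longrightarrow> g \<in> H \<Longrightarrow> h \<in> H
    \<Longrightarrow> hnorm ip (f - h) \<le> hnorm ip (f - g) + hnorm ip (g - h)"
  using hnorm_triangle[of "f - g" "g - h"] by simp

lemma parallelogram: assumes "a \<in> H" "b \<in> H"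
  shows "(hnorm ip (a + b))\<^sup>2 + (hnorm ip (a - b))\<^sup>2 = 2 * (hnorm ip a)\<^sup>2 + 2 * (hnorm ip b)\<^sup>2"
proof -
  have "ip (a + b) (a + b) + ip (a - b) (a - b) = 2 * ip a a + 2 * ip b b"
    using assms by (simp add: ip_add ip_add_right ip_diff ip_diff_right algebra_simps)
  from arg_cong[where f = Re, OF this]
  have "Re (ip (a + b) (a + b)) + Re (ip (a - b) (a - b)) = 2 * Re (ip a a) + 2 * Re (ip b b)"
    by simp
  then show ?thesis
    using hnorm_sq[OF add_in[OF assms]] hnorm_sq[OF diff_in[OF assms]] hnorm_sq[OF assms(1)]
      hnorm_sq[OF assms(2)] by linarith
qed

lemma ex_pos_bound:
  assumes "\<forall>h\<in>H. N h \<le> C * hnorm ip h"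
  obtains C' where "C' > 0" "\<forall>h\<in>H. N h \<le> C' * hnorm ip h"
proof
  show "max C 1 > 0" by simp
  show "\<forall>h\<in>H. N h \<le> max C 1 * hnorm ip h"
  proof
    fix h assume h: "h \<in> H"
    have "C * hnorm ip h \<le> max C 1 * hnorm ip h"
      using h by (intro mult_right_mono) auto
    then show "N h \<le> max C 1 * hnorm ip h" using assms h by fastforce
  qed
qed

section \<open>Closed subspaces and orthogonal projection\<close>

definition hclosure :: "cfun set \<Rightarrow> cfun set" where
  "hclosure S = {g \<in> H. \<forall>e>0. \<exists>v\<in>S. hnorm ip (g - v) < e}"

definition hsubspace :: "cfun set \<Rightarrow> bool" where
  "hsubspace V \<longleftrightarrow> V \<subseteq> H \<and> 0 \<in> V \<and> (\<forall>f\<in>V. \<forall>g\<in>V. f + g \<in> V) \<and> (\<forall>c. \<forall>f\<in>V. smul c f \<in> V)"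

definition closed_hsubspace :: "cfun set \<Rightarrow> bool" where
  "closed_hsubspace V \<longleftrightarrow> hsubspace V \<and> hclosure V \<subseteq> V"

lemma hsubspace_diff: "hsubspace V \<Longrightarrow> f \<in> V \<Longrightarrow> g \<in> V \<Longrightarrow> f - g \<in> V"
  unfolding hsubspace_def by (metis diff_conv_add_uminus smul_minus_one)

lemma hclosure_mono: "S \<subseteq> T \<Longrightarrow> hclosure S \<subseteq> hclosure T"
  by (fastforce simp: hclosure_def)

lemma subset_hclosure: "S \<subseteq> H \<Longrightarrow> S \<subseteq> hclosure S"
  by (force simp: hclosure_def)

lemma hclosure_subset_H: "hclosure S \<subseteq> H"
  by (auto simp: hclosure_def)

lemma hclosureD:
  assumes "g \<in> hclosure S" "e > 0" obtains v where "v \<in> S" "hnorm ip (g - v) < e"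
  using assms by (auto simp: hclosure_def)

lemma hclosureI:
  assumes "g \<in> H" "\<And>e. e > 0 \<Longrightarrow> \<exists>v\<in>S. hnorm ip (g - v) < e" shows "g \<in> hclosure S"
  using assms by (auto simp: hclosure_def)

lemma hclosure_add:
  assumes S: "hsubspace S" and f: "f \<in> hclosure S" and g: "g \<in> hclosure S"
  shows "f + g \<in> hclosure S"
proof (rule hclosureI)
  have fg: "f \<in> H" "g \<in> H" using f g hclosure_subset_H by auto
  then show "f + g \<in> H" by simp
  fix e :: real assume "e > 0"
  then obtain u v where uv: "u \<in> S" "hnorm ip (f - u) < e / 2" "v \<in> S" "hnorm ip (g - v) < e / 2"
    using f g by (metis hclosureD half_gt_zero)
  have "u \<in> H" "v \<in> H" using uv S by (auto simp: hsubspace_def)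
  moreover have "f + g - (u + v) = (f - u) + (g - v)" by simp
  ultimately have "hnorm ip (f + g - (u + v)) \<le> hnorm ip (f - u) + hnorm ip (g - v)"
    using fg by (metis diff_in hnorm_triangle)
  then show "\<exists>w\<in>S. hnorm ip (f + g - w) < e"
    using S uv by (intro bexI[of _ "u + v"]) (auto simp: hsubspace_def)
qed

lemma hclosure_smul:
  assumes S: "hsubspace S" and f: "f \<in> hclosure S"
  shows "smul c f \<in> hclosure S"
proof (rule hclosureI)
  have fH: "f \<in> H" using f hclosure_subset_H by auto
  then show "smul c f \<in> H" by simp
  fix e :: real assume e: "e > 0"
  then obtain u where u: "u \<in> S" "hnorm ip (f - u) < e / (cmod c + 1)"
    using f by (metis hclosureD divide_pos_pos norm_ge_zero add_nonneg_pos zero_less_one)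
  have "smul c f - smul c u = smul c (f - u)"
    by (simp add: smul_def fun_eq_iff algebra_simps)
  then have "hnorm ip (smul c f - smul c u) = cmod c * hnorm ip (f - u)"
    using fH u S by (auto simp: hnorm_smul hsubspace_def)
  also have "\<dots> \<le> cmod c * (e / (cmod c + 1))"
    using u by (intro mult_left_mono) auto
  also have "\<dots> = e * (cmod c / (cmod c + 1))"
    by simp
  also have "\<dots> < e * 1"
    using e by (intro mult_strict_left_mono) (auto simp: divide_less_eq_1 add_nonneg_pos)
  finally show "\<exists>w\<in>S. hnorm ip (smul c f - w) < e"
    using S u by (intro bexI[of _ "smul c u"]) (auto simp: hsubspace_def)
qed

lemma hclosure_hclosure_subset:
  assumes "S \<subseteq> H" shows "hclosure (hclosure S) \<subseteq> hclosure S"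
proof
  fix g assume g: "g \<in> hclosure (hclosure S)"
  show "g \<in> hclosure S"
  proof (rule hclosureI)
    show gH: "g \<in> H" using g hclosure_subset_H by auto
    fix e :: real assume "e > 0"
    then obtain v u where vu: "v \<in> hclosure S" "hnorm ip (g - v) < e / 2"
      "u \<in> S" "hnorm ip (v - u) < e / 2"
      using g by (metis hclosureD half_gt_zero)
    have "hnorm ip (g - u) \<le> hnorm ip (g - v) + hnorm ip (v - u)"
      using vu gH assms hclosure_subset_H by (intro hnorm_triangle_diff) auto
    then show "\<exists>u\<in>S. hnorm ip (g - u) < e"
      using vu by (intro bexI[of _ u]) auto
  qed
qed

lemma closed_hsubspace_hclosure:
  assumes S: "hsubspace S" shows "closed_hsubspace (hclosure S)"
proof -
  have "S \<subseteq> H" "0 \<in> S" using S by (auto simp: hsubspace_def)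
  then have "0 \<in> hclosure S" using subset_hclosure by blast
  then show ?thesis
    using S hclosure_subset_H hclosure_add hclosure_smul hclosure_hclosure_subset[OF \<open>S \<subseteq> H\<close>]
    unfolding closed_hsubspace_def hsubspace_def[of "hclosure S"] by blast
qed

lemma almost_nearest_points_close:
  assumes V: "hsubspace V" and x: "x \<in> H" and u: "u \<in> V" and w: "w \<in> V"
    and \<delta>: "\<forall>v\<in>V. \<delta> \<le> (hnorm ip (x - v))\<^sup>2"
  shows "(hnorm ip (u - w))\<^sup>2 \<le> 2 * ((hnorm ip (x - u))\<^sup>2 - \<delta>) + 2 * ((hnorm ip (x - w))\<^sup>2 - \<delta>)"
proof -
  have H: "u \<in> H" "w \<in> H" using V u w by (auto simp: hsubspace_def)
  define m where "m = smul (1/2) (u + w)"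
  define a where "a = x - u"
  define b where "b = x - w"
  have "m \<in> V" using V u w by (simp add: hsubspace_def m_def)
  then have mH: "m \<in> H" using V by (auto simp: hsubspace_def)
  have "a + b = smul 2 (x - m)"
    by (simp add: a_def b_def m_def smul_def fun_eq_iff algebra_simps)
  then have "(hnorm ip (a + b))\<^sup>2 = 4 * (hnorm ip (x - m))\<^sup>2"
    using x mH by (simp add: hnorm_smul power_mult_distrib)
  also have "\<dots> \<ge> 4 * \<delta>" using \<delta> \<open>m \<in> V\<close> by simp
  finally have "(hnorm ip (a + b))\<^sup>2 \<ge> 4 * \<delta>" .
  moreover have "a - b = w - u" by (simp add: a_def b_def)
  moreover have "(hnorm ip (a + b))\<^sup>2 + (hnorm ip (a - b))\<^sup>2 = 2 * (hnorm ip a)\<^sup>2 + 2 * (hnorm ip b)\<^sup>2"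
    using x H by (intro parallelogram) (auto simp: a_def b_def)
  ultimately show ?thesis
    using hnorm_minus_commute[OF H] by (simp add: a_def b_def)
qed

lemma hnorm_diff_tendsto:
  assumes x: "x \<in> H" and y: "y \<in> H" and X: "\<And>n. X n \<in> H"
    and lim: "(\<lambda>n. hnorm ip (X n - y)) \<longlonglongrightarrow> 0"
  shows "(\<lambda>n. hnorm ip (x - X n)) \<longlonglongrightarrow> hnorm ip (x - y)"
proof (rule LIM_zero_cancel, rule Lim_null_comparison[OF always_eventually lim], rule allI)
  fix n
  have "hnorm ip (x - X n) \<le> hnorm ip (x - y) + hnorm ip (y - X n)"
    "hnorm ip (x - y) \<le> hnorm ip (x - X n) + hnorm ip (X n - y)"
    using x y X by (auto intro: hnorm_triangle_diff)
  then show "norm (hnorm ip (x - X n) - hnorm ip (x - y)) \<le> hnorm ip (X n - y)"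
    using hnorm_minus_commute[OF y X] by (simp add: abs_le_iff)
qed

lemma convergent_if_dist_sq_bound:
  assumes XH: "\<And>n. X n \<in> H"
    and bound: "\<And>m n. (hnorm ip (X m - X n))\<^sup>2 \<le> 2 * inverse (Suc m) + 2 * inverse (Suc n)"
  shows "\<exists>y\<in>H. (\<lambda>n. hnorm ip (X n - y)) \<longlonglongrightarrow> 0"
proof (rule complete[OF XH])
  fix e :: real assume "e > 0"
  then obtain N where N: "inverse (real (Suc N)) < e\<^sup>2 / 4"
    using reals_Archimedean[of "e\<^sup>2 / 4"] by auto
  have "hnorm ip (X m - X n) < e" if "m \<ge> N" "n \<ge> N" for m n
  proof -
    have "inverse (real (Suc m)) \<le> inverse (Suc N)" "inverse (real (Suc n)) \<le> inverse (Suc N)"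
      using that by (auto simp: field_simps)
    then have "(hnorm ip (X m - X n))\<^sup>2 < e\<^sup>2"
      using bound[of m n] N by linarith
    then show ?thesis using \<open>e > 0\<close> by (simp add: power_less_imp_less_base)
  qed
  then show "\<exists>N. \<forall>m\<ge>N. \<forall>n\<ge>N. hnorm ip (X m - X n) < e" by blast
qed

lemma closed_hsubspace_limit:
  assumes V: "closed_hsubspace V" and X: "\<And>n. X n \<in> V" and y: "y \<in> H"
    and lim: "(\<lambda>n. hnorm ip (X n - y)) \<longlonglongrightarrow> 0"
  shows "y \<in> V"
proof -
  have "y \<in> hclosure V"
  proof (rule hclosureI[OF y])
    fix e :: real assume "e > 0"
    have "\<forall>\<^sub>F n in sequentially. hnorm ip (X n - y) < e"
      using order_tendstoD(2)[OF lim \<open>e > 0\<close>] .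
    then obtain n where "hnorm ip (X n - y) < e"
      by (auto simp: eventually_sequentially)
    moreover have "X n \<in> H" using X V by (auto simp: closed_hsubspace_def hsubspace_def)
    ultimately show "\<exists>v\<in>V. hnorm ip (y - v) < e"
      using X y hnorm_minus_commute by metis
  qed
  then show ?thesis using V by (auto simp: closed_hsubspace_def)
qed

lemma nearest_point_exists:
  assumes V: "closed_hsubspace V" and x: "x \<in> H"
  shows "\<exists>y\<in>V. \<forall>v\<in>V. hnorm ip (x - y) \<le> hnorm ip (x - v)"
proof -
  have VS: "hsubspace V" and VH: "V \<subseteq> H"
    using V by (auto simp: closed_hsubspace_def hsubspace_def)
  define D where "D = (\<lambda>v. (hnorm ip (x - v))\<^sup>2) ` V"
  define \<delta> where "\<delta> = Inf D"
  have "D \<noteq> {}" using VS by (auto simp: D_def hsubspace_def)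
  have "bdd_below D" by (auto simp: D_def intro!: bdd_belowI[of _ 0])
  then have \<delta>_le: "\<forall>v\<in>V. \<delta> \<le> (hnorm ip (x - v))\<^sup>2"
    by (auto simp: \<delta>_def D_def intro: cInf_lower)
  have "\<exists>v\<in>V. (hnorm ip (x - v))\<^sup>2 < \<delta> + inverse (Suc n)" for n
    using cInf_lessD[OF \<open>D \<noteq> {}\<close>, of "\<delta> + inverse (Suc n)"] by (auto simp: \<delta>_def D_def)
  then obtain X where XV: "\<And>n. X n \<in> V"
    and X: "\<And>n. (hnorm ip (x - X n))\<^sup>2 < \<delta> + inverse (Suc n)"
    by metis
  have XH: "\<And>n. X n \<in> H" using XV VH by auto
  have "(hnorm ip (X m - X n))\<^sup>2 \<le> 2 * inverse (Suc m) + 2 * inverse (Suc n)" for m n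
    using almost_nearest_points_close[OF VS x XV XV \<delta>_le, of m n] X[of m] X[of n] by argo
  then obtain y where yH: "y \<in> H" and lim: "(\<lambda>n. hnorm ip (X n - y)) \<longlonglongrightarrow> 0"
    using convergent_if_dist_sq_bound[of X, OF XH] by blast
  have "y \<in> V" by (rule closed_hsubspace_limit[OF V XV yH lim])
  have "(hnorm ip (x - y))\<^sup>2 \<le> \<delta>"
  proof (rule tendsto_le[OF trivial_limit_sequentially])
    show "(\<lambda>n. \<delta> + inverse (real (Suc n))) \<longlonglongrightarrow> \<delta>"
      using tendsto_add[OF tendsto_const LIMSEQ_inverse_real_of_nat] by simp
    show "(\<lambda>n. (hnorm ip (x - X n))\<^sup>2) \<longlonglongrightarrow> (hnorm ip (x - y))\<^sup>2"
      by (intro tendsto_power hnorm_diff_tendsto x yH XH lim)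
    show "\<forall>\<^sub>F n in sequentially. (hnorm ip (x - X n))\<^sup>2 \<le> \<delta> + inverse (real (Suc n))"
      using X by (simp add: less_imp_le)
  qed
  then have "\<forall>v\<in>V. hnorm ip (x - y) \<le> hnorm ip (x - v)"
    using \<delta>_le x VH \<open>y \<in> V\<close> by (metis diff_in hnorm_nonneg order_trans power2_le_imp_le subsetD)
  then show ?thesis using \<open>y \<in> V\<close> by blast
qed

lemma best_approximation_orthogonal:
  assumes V: "hsubspace V" and x: "x \<in> H" and y: "y \<in> V"
    and min: "\<forall>v\<in>V. hnorm ip (x - y) \<le> hnorm ip (x - v)" and v: "v \<in> V"
  shows "ip (x - y) v = 0"
proof (cases "v = 0")
  case False
  have vH: "v \<in> H" and yH: "y \<in> H" using V v y by (auto simp: hsubspace_def)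
  define z where "z = x - y"
  define t where "t = ip z v / of_real ((hnorm ip v)\<^sup>2)"
  have zH: "z \<in> H" using x yH by (simp add: z_def)
  have "y + smul t v \<in> V" using V y v by (simp add: hsubspace_def)
  then have "hnorm ip z \<le> hnorm ip (z - smul t v)"
    using min by (force simp: z_def algebra_simps)
  then have "(hnorm ip z)\<^sup>2 \<le> (hnorm ip (z - smul t v))\<^sup>2"
    using zH by (intro power_mono) auto
  then have "(hnorm ip z)\<^sup>2 \<le> (hnorm ip z)\<^sup>2 - (cmod (ip z v))\<^sup>2 / (hnorm ip v)\<^sup>2"
    using hnorm_sq_remove_component[OF zH vH False] by (simp add: t_def)
  then have "(cmod (ip z v))\<^sup>2 / (hnorm ip v)\<^sup>2 \<le> 0" by simp
  then show ?thesis using hnorm_pos[OF vH False] by (simp add: z_def divide_le_0_iff)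
qed (use x y V in \<open>auto simp: hsubspace_def\<close>)

lemma proj_characterization:
  assumes V: "closed_hsubspace V" and x: "x \<in> H"
  shows "proj ip V x \<in> V \<and> (\<forall>v\<in>V. ip (x - proj ip V x) v = 0)"
proof -
  have VS: "hsubspace V" using V by (simp add: closed_hsubspace_def)
  obtain y where "y \<in> V" "\<forall>v\<in>V. hnorm ip (x - y) \<le> hnorm ip (x - v)"
    using nearest_point_exists[OF V x] by blast
  then have y: "y \<in> V \<and> (\<forall>v\<in>V. ip (x - y) v = 0)"
    using best_approximation_orthogonal[OF VS x] by blast
  have "y' = y" if y': "y' \<in> V \<and> (\<forall>v\<in>V. ip (x - y') v = 0)" for y'
  proof -
    have "y - y' \<in> V" using VS y y' by (simp add: hsubspace_diff)
    moreover have "y \<in> H" "y' \<in> H" using VS y y' by (auto simp: hsubspace_def)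
    ultimately have "ip (y - y') (y - y') = 0"
      using x y y' ip_diff[of "x - y'" "x - y" "y - y'"] by (simp add: hsubspace_def)
    then show ?thesis using \<open>y \<in> H\<close> \<open>y' \<in> H\<close> by (metis diff_in eq_iff_diff_eq_0 ip_self_eq_0)
  qed
  then have "\<exists>!y. y \<in> V \<and> (\<forall>v\<in>V. ip (x - y) v = 0)" using y by blast
  then show ?thesis unfolding proj_def by (rule theI')
qed

lemma ip_proj:
  assumes V: "closed_hsubspace V" and x: "x \<in> H" and v: "v \<in> V"
  shows "ip v (proj ip V x) = ip v x"
proof -
  have "v \<in> H" "proj ip V x \<in> H" and orth: "ip (x - proj ip V x) v = 0"
    using proj_characterization[OF V x] V v by (auto simp: closed_hsubspace_def hsubspace_def)
  then show ?thesis
    using x ip_diff[of x "proj ip V x" v] ip_commute by (metis complex_cnj_cancel_iff eq_iff_diff_eq_0)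
qed

section \<open>Bounded functionals and derivative kernels\<close>

definition bounded_functional :: "(cfun \<Rightarrow> complex) \<Rightarrow> bool" where
  "bounded_functional L \<longleftrightarrow>
     (\<forall>f\<in>H. \<forall>g\<in>H. L (f + g) = L f + L g) \<and> (\<forall>c. \<forall>f\<in>H. L (smul c f) = c * L f) \<and>
     (\<exists>C. \<forall>f\<in>H. cmod (L f) \<le> C * hnorm ip f)"

lemma bounded_functional_add:
  "bounded_functional L \<Longrightarrow> f \<in> H \<Longrightarrow> g \<in> H \<Longrightarrow> L (f + g) = L f + L g"
  unfolding bounded_functional_def by blast

lemma bounded_functional_smul: "bounded_functional L \<Longrightarrow> f \<in> H \<Longrightarrow> L (smul c f) = c * L f"
  unfolding bounded_functional_def by blast

lemma bounded_functional_pos_bound: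
  assumes "bounded_functional L" obtains C where "C > 0" "\<forall>h\<in>H. cmod (L h) \<le> C * hnorm ip h"
proof -
  obtain C0 where "\<forall>h\<in>H. cmod (L h) \<le> C0 * hnorm ip h"
    using assms unfolding bounded_functional_def by blast
  then show ?thesis using that by (rule ex_pos_bound)
qed

lemma bounded_functional_diff:
  assumes L: "bounded_functional L" and "f \<in> H" "g \<in> H" shows "L (f - g) = L f - L g"
  using bounded_functional_add[OF L, of f "smul (-1) g"] bounded_functional_smul[OF L, of g "-1"]
    assms by (simp add: smul_minus_one)

lemma bounded_functional_kernel:
  assumes L: "bounded_functional L" shows "closed_hsubspace {f \<in> H. L f = 0}"
proof -
  obtain C where C: "C > 0" "\<forall>h\<in>H. cmod (L h) \<le> C * hnorm ip h"
    using bounded_functional_pos_bound[OF L] .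
  have "L g = 0" if g: "g \<in> hclosure {f \<in> H. L f = 0}" for g
  proof -
    have gH: "g \<in> H" using g hclosure_subset_H by auto
    have "cmod (L g) \<le> e" if "e > 0" for e
    proof -
      have "e / C > 0" using \<open>e > 0\<close> C by simp
      then obtain v where "v \<in> {f \<in> H. L f = 0}" "hnorm ip (g - v) < e / C"
        by (rule hclosureD[OF g])
      then have v: "v \<in> H" "L v = 0" "hnorm ip (g - v) < e / C" by auto
      have "cmod (L g) = cmod (L (g - v))" using bounded_functional_diff[OF L gH v(1)] v by simp
      also have "\<dots> \<le> C * hnorm ip (g - v)" using C gH v by simp
      also have "\<dots> \<le> e" using v C by (simp add: pos_less_divide_eq mult.commute)
      finally show ?thesis .
    qed
    then have "cmod (L g) \<le> 0" by (rule dense_ge)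
    then show ?thesis by simp
  qed
  moreover have "hsubspace {f \<in> H. L f = 0}"
    using bounded_functional_add[OF L] bounded_functional_smul[OF L]
      bounded_functional_diff[OF L zero_in zero_in]
    unfolding hsubspace_def by auto
  ultimately show ?thesis
    using hclosure_subset_H unfolding closed_hsubspace_def by blast
qed

lemma riesz_representation:
  assumes L: "bounded_functional L" shows "\<exists>k\<in>H. \<forall>f\<in>H. ip f k = L f"
proof (cases "\<forall>f\<in>H. L f = 0")
  case True then show ?thesis by (intro bexI[of _ 0]) auto
next
  case False
  then obtain u where u: "u \<in> H" "L u \<noteq> 0" by blast
  define K where "K = {f \<in> H. L f = 0}"
  have K: "closed_hsubspace K" unfolding K_def by (rule bounded_functional_kernel[OF L])
  define w where "w = u - proj ip K u"
  have P: "proj ip K u \<in> H" "L (proj ip K u) = 0" and orth: "\<forall>v\<in>K. ip w v = 0"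
    using proj_characterization[OF K u(1)] by (auto simp: K_def w_def)
  have wH: "w \<in> H" using u P by (simp add: w_def)
  have Lw: "L w = L u" using bounded_functional_diff[OF L u(1) P(1)] P by (simp add: w_def)
  have ip_w: "ip f w = L f / L w * ip w w" if f: "f \<in> H" for f
  proof -
    define r where "r = f - smul (L f / L w) w"
    have rH: "r \<in> H" using f wH by (simp add: r_def)
    have "L r = 0"
      using bounded_functional_diff[OF L f] bounded_functional_smul[OF L wH] wH Lw u
      by (simp add: r_def)
    then have "ip w r = 0" using orth rH by (simp add: K_def)
    then have "ip r w = 0" using ip_commute[OF wH rH] by simp
    then show ?thesis using f wH by (simp add: r_def ip_diff ip_smul)
  qed
  have "w \<noteq> 0" using Lw u bounded_functional_diff[OF L zero_in zero_in] by auto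
  then have ww: "ip w w \<noteq> 0" using ip_self_eq_0[OF wH] by blast
  define k where "k = smul (cnj (L w / ip w w)) w"
  have "ip f k = L f" if "f \<in> H" for f
    using that wH ip_w[OF that] ww Lw u by (simp add: k_def ip_smul_right)
  then show ?thesis using wH by (intro bexI[of _ k]) (auto simp: k_def)
qed

text \<open>Outside \<open>H\<close>, \<^const>\<open>hnorm\<close> need not be nonnegative or symmetric, hence the junk value 0.\<close>

definition hdist :: "cfun \<Rightarrow> cfun \<Rightarrow> real" where
  "hdist f g = (if f \<in> H \<and> g \<in> H then hnorm ip (f - g) else 0)"

sublocale hmetric: Metric_space H hdist
proof
  show "0 \<le> hdist f g" for f g by (simp add: hdist_def)
  show "hdist f g = hdist g f" for f g by (simp add: hdist_def hnorm_minus_commute)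
  show "f \<in> H \<Longrightarrow> g \<in> H \<Longrightarrow> hdist f g = 0 \<longleftrightarrow> f = g" for f g
    by (simp add: hdist_def hnorm_eq_0_iff)
  show "f \<in> H \<Longrightarrow> g \<in> H \<Longrightarrow> h \<in> H \<Longrightarrow> hdist f h \<le> hdist f g + hdist g h" for f g h
    by (simp add: hdist_def hnorm_triangle_diff)
qed

lemma hmetric_mcomplete: "hmetric.mcomplete"
  unfolding hmetric.mcomplete_def
proof (intro allI impI)
  fix X assume X: "hmetric.MCauchy X"
  then have XH: "\<And>n. X n \<in> H" by (auto simp: hmetric.MCauchy_def)
  moreover have "\<And>e. e > 0 \<Longrightarrow> \<exists>N. \<forall>m\<ge>N. \<forall>n\<ge>N. hnorm ip (X m - X n) < e"
    using X XH by (simp add: hmetric.MCauchy_def hdist_def)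
  ultimately obtain g where gH: "g \<in> H" and lim: "(\<lambda>n. hnorm ip (X n - g)) \<longlonglongrightarrow> 0"
    using complete by blast
  have "limitin hmetric.mtopology X g sequentially"
    unfolding hmetric.limitin_metric
  proof (intro conjI allI impI gH)
    fix e :: real assume "e > 0"
    from order_tendstoD(2)[OF lim this]
    show "\<forall>\<^sub>F n in sequentially. X n \<in> H \<and> hdist (X n) g < e"
      by eventually_elim (use XH gH in \<open>simp add: hdist_def\<close>)
  qed
  then show "\<exists>g. limitin hmetric.mtopology X g sequentially" by blast
qed

definition sphere_bounded :: "complex \<Rightarrow> real \<Rightarrow> nat \<Rightarrow> cfun set" where
  "sphere_bounded c r n = {f \<in> H. \<forall>z\<in>sphere c r. cmod (f z) \<le> real n}"

lemma closedin_sphere_bounded: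
  assumes r: "sphere c r \<subseteq> \<Omega>" shows "closedin hmetric.mtopology (sphere_bounded c r n)"
  unfolding hmetric.closedin_metric
proof (intro conjI allI impI)
  show "sphere_bounded c r n \<subseteq> H" by (auto simp: sphere_bounded_def)
  fix f assume f: "f \<in> H - sphere_bounded c r n"
  then obtain z where z: "z \<in> sphere c r" "cmod (f z) > real n"
    by (auto simp: sphere_bounded_def not_le)
  have "z \<in> \<Omega>" using z r by auto
  then obtain C0 where "\<forall>h\<in>H. cmod (h z) \<le> C0 * hnorm ip h" using eval_bounded by blast
  then obtain C where C: "C > 0" "\<forall>h\<in>H. cmod (h z) \<le> C * hnorm ip h"
    by (rule ex_pos_bound)
  define \<rho> where "\<rho> = (cmod (f z) - real n) / C"
  have "disjnt (sphere_bounded c r n) (hmetric.mball f \<rho>)"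
    unfolding disjnt_iff
  proof (intro allI notI)
    fix g assume "g \<in> sphere_bounded c r n \<and> g \<in> hmetric.mball f \<rho>"
    then have g: "g \<in> H" "cmod (g z) \<le> real n" "hnorm ip (f - g) < \<rho>"
      using f z by (auto simp: sphere_bounded_def hdist_def)
    have "cmod (f z - g z) \<le> C * hnorm ip (f - g)" using C(2) f g by (metis DiffD1 diff_in minus_apply)
    also have "\<dots> < cmod (f z) - real n" using g C by (simp add: \<rho>_def pos_less_divide_eq mult.commute)
    finally show False using g norm_triangle_sub[of "f z" "g z"] by linarith
  qed
  moreover have "\<rho> > 0" using z C by (simp add: \<rho>_def)
  ultimately show "\<exists>\<rho>>0. disjnt (sphere_bounded c r n) (hmetric.mball f \<rho>)" by blast
qed

lemma Union_sphere_bounded: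
  assumes r: "sphere c r \<subseteq> \<Omega>" shows "(\<Union>n. sphere_bounded c r n) = H"
proof
  show "(\<Union>n. sphere_bounded c r n) \<subseteq> H" by (auto simp: sphere_bounded_def)
  show "H \<subseteq> (\<Union>n. sphere_bounded c r n)"
  proof
    fix f assume f: "f \<in> H"
    have "compact (f ` sphere c r)"
      using r holomorphic_on_imp_continuous_on[OF holomorphic[OF f]]
      by (intro compact_continuous_image) (auto intro: continuous_on_subset)
    then obtain B where "\<forall>z\<in>sphere c r. cmod (f z) \<le> B"
      by (meson compact_imp_bounded bounded_iff imageI)
    then have "f \<in> sphere_bounded c r (nat \<lceil>B\<rceil>)"
      using f by (force simp: sphere_bounded_def intro: order_trans[OF _ real_nat_ceiling_ge])
    then show "f \<in> (\<Union>n. sphere_bounded c r n)" by blast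
  qed
qed

text \<open>By Baire, one of the closed sets \<open>sphere_bounded c r n\<close> covering \<open>H\<close> contains a ball;
  translating and scaling that ball bounds every \<open>h\<close> on the circle.\<close>

lemma sphere_uniform_bound:
  assumes r: "sphere c r \<subseteq> \<Omega>"
  shows "\<exists>K. \<forall>h\<in>H. \<forall>z\<in>sphere c r. cmod (h z) \<le> K * hnorm ip h"
proof -
  have "\<exists>n. hmetric.mtopology interior_of sphere_bounded c r n \<noteq> {}"
  proof (rule ccontr)
    assume "\<not> ?thesis"
    then have "hmetric.mtopology interior_of (\<Union>n. sphere_bounded c r n) = {}"
      using closedin_sphere_bounded[OF r]
      by (intro hmetric.metric_Baire_category_alt[OF hmetric_mcomplete]) auto
    then have "H = {}"
      using Union_sphere_bounded[OF r] interior_of_topspace[of hmetric.mtopology] by simp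
    then show False using zero_in by blast
  qed
  then obtain n f0 \<rho> where f0: "f0 \<in> H" and \<rho>: "\<rho> > 0"
    and ball: "hmetric.mball f0 \<rho> \<subseteq> sphere_bounded c r n"
    by (auto simp: hmetric.in_interior_of_mball)
  have "cmod (h z) \<le> 4 * real n / \<rho> * hnorm ip h" if h: "h \<in> H" and z: "z \<in> sphere c r" for h z
  proof (cases "h = 0")
    case False
    have nh: "hnorm ip h > 0" using hnorm_pos[OF h False] .
    define s where "s = \<rho> / (2 * hnorm ip h)"
    have s: "s > 0" "s * hnorm ip h = \<rho> / 2" using \<rho> nh by (simp_all add: s_def)
    have "f0 - (f0 + smul (of_real s) h) = smul (- of_real s) h"
      by (simp add: smul_def fun_eq_iff)
    then have "hdist f0 (f0 + smul (of_real s) h) = \<rho> / 2"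
      using f0 h s by (simp add: hdist_def hnorm_smul)
    then have "f0 + smul (of_real s) h \<in> sphere_bounded c r n"
      using ball f0 h \<rho> by auto
    then have "cmod (f0 z + of_real s * h z) \<le> real n" "cmod (f0 z) \<le> real n"
      using z f0 ball \<rho> by (auto simp: sphere_bounded_def smul_def)
    then have "s * cmod (h z) \<le> 2 * real n"
      using norm_triangle_ineq4[of "f0 z + of_real s * h z" "f0 z"] s
      by (simp add: norm_mult)
    then show ?thesis
      using s nh by (simp add: s_def field_simps)
  qed (use f0 in simp)
  then show ?thesis by blast
qed

lemma higher_deriv_bounded:
  assumes w: "w \<in> \<Omega>" shows "\<exists>C. \<forall>f\<in>H. cmod ((deriv ^^ m) f w) \<le> C * hnorm ip f"
proof -
  obtain r where r: "r > 0" "cball w r \<subseteq> \<Omega>" using open_domain w open_contains_cball by blast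
  then obtain K where K: "\<forall>h\<in>H. \<forall>z\<in>sphere w r. cmod (h z) \<le> K * hnorm ip h"
    using sphere_uniform_bound[of w r] sphere_cball[of w r] by blast
  have "cmod ((deriv ^^ m) h w) \<le> fact m * K / r ^ m * hnorm ip h" if h: "h \<in> H" for h
  proof -
    have "cmod ((deriv ^^ m) h w) \<le> fact m * (K * hnorm ip h) / r ^ m"
    proof (rule Cauchy_inequality)
      show "h holomorphic_on ball w r"
        using holomorphic[OF h] r ball_subset_cball holomorphic_on_subset by blast
      show "continuous_on (cball w r) h"
        using holomorphic_on_imp_continuous_on[OF holomorphic[OF h]] r continuous_on_subset by blast
      show "cmod (h z) \<le> K * hnorm ip h" if "cmod (w - z) = r" for z
        using K h that by (simp add: dist_norm)
    qed (use r in simp)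
    then show ?thesis by simp
  qed
  then show ?thesis by blast
qed

lemma bounded_functional_higher_deriv:
  assumes w: "w \<in> \<Omega>" shows "bounded_functional (\<lambda>f. (deriv ^^ m) f w)"
  unfolding bounded_functional_def
proof (intro conjI ballI allI)
  show "(deriv ^^ m) (f + g) w = (deriv ^^ m) f w + (deriv ^^ m) g w" if "f \<in> H" "g \<in> H" for f g
    using higher_deriv_add[OF holomorphic holomorphic open_domain w] that by (simp add: plus_fun_def)
  show "(deriv ^^ m) (smul c f) w = c * (deriv ^^ m) f w" if "f \<in> H" for c f
    using higher_deriv_cmult[OF holomorphic w open_domain] that by (simp add: smul_def)
qed (rule higher_deriv_bounded[OF w])

lemma rkernel_reproduces:
  assumes w: "w \<in> \<Omega>"
  shows "rkernel H ip m w \<in> H \<and> (\<forall>f\<in>H. ip f (rkernel H ip m w) = (deriv ^^ m) f w)"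
proof -
  obtain k where k: "k \<in> H" "\<forall>f\<in>H. ip f k = (deriv ^^ m) f w"
    using riesz_representation[OF bounded_functional_higher_deriv[OF w]] by blast
  have "k' = k" if "k' \<in> H" "\<forall>f\<in>H. ip f k' = (deriv ^^ m) f w" for k'
    using ip_self_eq_0[of "k' - k"] that k by (simp add: ip_diff_right)
  then have "\<exists>!k. k \<in> H \<and> (\<forall>f\<in>H. ip f k = (deriv ^^ m) f w)" using k by blast
  then show ?thesis unfolding rkernel_def by (rule theI')
qed

section \<open>The cyclic subspace\<close>

definition poly_mult :: "complex poly \<Rightarrow> cfun \<Rightarrow> cfun" where
  "poly_mult p f = (\<lambda>z. poly p z * f z)"

lemma mult_power_eq_shift_power: "(\<lambda>z. z ^ k * g z) = (shift ^^ k) g"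
  by (induction k) (simp_all add: shift_def fun_eq_iff algebra_simps)

lemma mult_power_in: "g \<in> H \<Longrightarrow> (\<lambda>z. z ^ k * g z) \<in> H"
  unfolding mult_power_eq_shift_power by (induction k) simp_all

lemma poly_mult_in_hsubspace:
  assumes V: "hsubspace V" and f: "\<And>j. (\<lambda>z. z ^ j * f z) \<in> V"
  shows "poly_mult p f \<in> V"
proof -
  have Vadd: "\<And>u v. u \<in> V \<Longrightarrow> v \<in> V \<Longrightarrow> u + v \<in> V"
    and Vsmul: "\<And>c u. u \<in> V \<Longrightarrow> smul c u \<in> V" and V0: "0 \<in> V"
    using V by (auto simp: hsubspace_def)
  have "\<forall>j. (\<lambda>z. z ^ j * poly_mult p f z) \<in> V"
  proof (induction p)
    case 0
    have "(\<lambda>z. z ^ j * poly_mult 0 f z) = 0" for j by (simp add: poly_mult_def zero_fun_def)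
    then show ?case using V0 by simp
  next
    case (pCons a p)
    show ?case
    proof
      fix j
      have "(\<lambda>z. z ^ j * poly_mult (pCons a p) f z)
          = smul a (\<lambda>z. z ^ j * f z) + (\<lambda>z. z ^ Suc j * poly_mult p f z)"
        by (simp add: poly_mult_def smul_def fun_eq_iff algebra_simps)
      moreover have "(\<lambda>z. z ^ Suc j * poly_mult p f z) \<in> V" using pCons.IH by blast
      ultimately show "(\<lambda>z. z ^ j * poly_mult (pCons a p) f z) \<in> V"
        using Vadd Vsmul f by presburger
    qed
  qed
  then have "(\<lambda>z. z ^ 0 * poly_mult p f z) \<in> V" by blast
  then show ?thesis by simp
qed

abbreviation poly_multiples :: "cfun \<Rightarrow> cfun set" where
  "poly_multiples f \<equiv> range (\<lambda>p. poly_mult p f)"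

lemma cyclic_eq_hclosure: "cyclic H ip f = hclosure (poly_multiples f)"
proof -
  have "(\<exists>v\<in>poly_multiples f. hnorm ip (g - v) < e) \<longleftrightarrow> (\<exists>p. hnorm ip (g - (\<lambda>z. poly p z * f z)) < e)"
    for g e by (auto simp: poly_mult_def)
  then show ?thesis by (simp add: cyclic_def hclosure_def)
qed

lemma cyclic_subset_H: "cyclic H ip f \<subseteq> H"
  by (auto simp: cyclic_def)

lemma poly_mult_in: "f \<in> H \<Longrightarrow> poly_mult p f \<in> H"
  using poly_mult_in_hsubspace[of H f p] mult_power_in
  by (simp add: hsubspace_def)

lemma hsubspace_poly_multiples: "f \<in> H \<Longrightarrow> hsubspace (poly_multiples f)"
  unfolding hsubspace_def
proof (intro conjI ballI allI)
  have "poly_mult 0 f = 0" by (simp add: poly_mult_def zero_fun_def)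
  then show "0 \<in> poly_multiples f" by (metis rangeI)
  have "poly_mult p f + poly_mult q f = poly_mult (p + q) f" for p q
    by (simp add: poly_mult_def fun_eq_iff algebra_simps)
  then show "u + v \<in> poly_multiples f" if "u \<in> poly_multiples f" "v \<in> poly_multiples f" for u v
    using that by auto
  have "smul c (poly_mult p f) = poly_mult (smult c p) f" for c p
    by (simp add: poly_mult_def smul_def fun_eq_iff)
  then show "smul c u \<in> poly_multiples f" if "u \<in> poly_multiples f" for c u
    using that by auto
qed (auto simp: poly_mult_in)

lemma closed_hsubspace_cyclic: "f \<in> H \<Longrightarrow> closed_hsubspace (cyclic H ip f)"
  unfolding cyclic_eq_hclosure by (intro closed_hsubspace_hclosure hsubspace_poly_multiples)

lemma in_cyclic_self: "f \<in> H \<Longrightarrow> f \<in> cyclic H ip f"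
  unfolding cyclic_eq_hclosure using poly_mult_in
  by (intro subsetD[OF subset_hclosure, of _ f] range_eqI[of _ _ 1]) (auto simp: poly_mult_def)

lemma shift_hclosure:
  assumes S: "S \<subseteq> H" "\<And>v. v \<in> S \<Longrightarrow> shift v \<in> S" and g: "g \<in> hclosure S"
  shows "shift g \<in> hclosure S"
proof (rule hclosureI)
  have gH: "g \<in> H" using g hclosure_subset_H by auto
  then show "shift g \<in> H" by simp
  obtain C0 where "\<forall>h\<in>H. hnorm ip (shift h) \<le> C0 * hnorm ip h" using shift_bounded by blast
  then obtain C where C: "C > 0" "\<forall>h\<in>H. hnorm ip (shift h) \<le> C * hnorm ip h"
    by (rule ex_pos_bound)
  fix e :: real assume "e > 0"
  then have "e / C > 0" using C by simp
  then obtain v where v: "v \<in> S" "hnorm ip (g - v) < e / C" by (rule hclosureD[OF g])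
  have "shift g - shift v = shift (g - v)" by (simp add: shift_def fun_eq_iff algebra_simps)
  then have "hnorm ip (shift g - shift v) \<le> C * hnorm ip (g - v)"
    using C gH v S by auto
  also have "\<dots> < e" using v C by (simp add: pos_less_divide_eq mult.commute)
  finally show "\<exists>w\<in>S. hnorm ip (shift g - w) < e" using v S by blast
qed

lemma cyclic_mult_power:
  assumes f: "f \<in> H" and g: "g \<in> cyclic H ip f" shows "(\<lambda>z. z ^ k * g z) \<in> cyclic H ip f"
proof -
  have "shift (poly_mult p f) = poly_mult (pCons 0 p) f" for p
    by (simp add: poly_mult_def shift_def fun_eq_iff)
  then have "shift v \<in> poly_multiples f" if "v \<in> poly_multiples f" for v
    using that by auto
  then have "shift h \<in> cyclic H ip f" if "h \<in> cyclic H ip f" for h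
    using that f poly_mult_in unfolding cyclic_eq_hclosure by (intro shift_hclosure) auto
  then show ?thesis
    unfolding mult_power_eq_shift_power using g by (induction k) auto
qed

lemma bounded_functional_ip: assumes u: "u \<in> H" shows "bounded_functional (\<lambda>v. ip v u)"
  unfolding bounded_functional_def
  using u ip_add ip_smul cauchy_schwarz[OF _ u] by (auto simp: mult.commute intro!: exI[of _ "hnorm ip u"])

lemma cyclic_orthogonal_eq_0:
  assumes f: "f \<in> H" and u: "u \<in> cyclic H ip f" and orth: "\<And>j. ip u (\<lambda>z. z ^ j * f z) = 0"
  shows "u = 0"
proof -
  have uH: "u \<in> H" using u closed_hsubspace_cyclic[OF f] by (auto simp: closed_hsubspace_def hsubspace_def)
  define K where "K = {v \<in> H. ip v u = 0}"
  have K: "closed_hsubspace K"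
    unfolding K_def by (rule bounded_functional_kernel[OF bounded_functional_ip[OF uH]])
  have "(\<lambda>z. z ^ j * f z) \<in> K" for j
    using orth[of j] ip_commute[OF uH mult_power_in[OF f]] f by (simp add: K_def mult_power_in)
  then have "poly_multiples f \<subseteq> K"
    using K poly_mult_in_hsubspace by (auto simp: closed_hsubspace_def)
  then have "u \<in> K"
    using u K hclosure_mono unfolding cyclic_eq_hclosure closed_hsubspace_def by blast
  then show ?thesis using ip_self_eq_0 uH by (simp add: K_def)
qed

lemma cyclic_vanishes_to:
  assumes f: "f \<in> H" and d: "vanishes_to d f" and g: "g \<in> cyclic H ip f"
  shows "vanishes_to d g"
  unfolding vanishes_to_def
proof (intro allI impI)
  fix j assume "j < d"
  define K where "K = {v \<in> H. (deriv ^^ j) v 0 = 0}"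
  have K: "closed_hsubspace K"
    unfolding K_def by (rule bounded_functional_kernel[OF bounded_functional_higher_deriv[OF zero_in_domain]])
  have "vanishes_to (0 + d) (poly_mult p f)" for p
    unfolding poly_mult_def
    by (rule vanishes_to_mult[OF _ holomorphic[OF f] open_domain zero_in_domain _ d])
      (auto intro!: holomorphic_intros simp: vanishes_to_def)
  then have "poly_multiples f \<subseteq> K"
    using \<open>j < d\<close> f poly_mult_in by (auto simp: K_def vanishes_to_def)
  then have "g \<in> K"
    using g K hclosure_mono unfolding cyclic_eq_hclosure closed_hsubspace_def by blast
  then show "(deriv ^^ j) g 0 = 0" by (simp add: K_def)
qed

lemma higher_deriv_mult_power_eq_0:
  assumes g: "g \<in> H" and d: "vanishes_to d g" and k: "k \<ge> 1"
  shows "(deriv ^^ d) (\<lambda>z. z ^ k * g z) 0 = 0"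
proof -
  have "vanishes_to (k + d) (\<lambda>z. z ^ k * g z)"
    by (rule vanishes_to_mult[OF _ holomorphic[OF g] open_domain zero_in_domain
          vanishes_to_power d]) (auto intro!: holomorphic_intros)
  then show ?thesis using k by (simp add: vanishes_to_def)
qed

lemma ord0_props:
  assumes f: "f \<in> H" and "f \<noteq> 0"
  shows "(deriv ^^ ord0 f) f 0 \<noteq> 0" and "vanishes_to (ord0 f) f"
proof -
  have "\<exists>n. (deriv ^^ n) f 0 \<noteq> 0"
  proof (rule ccontr)
    assume "\<nexists>n. (deriv ^^ n) f 0 \<noteq> 0"
    then have "f z = 0" for z
      using holomorphic_fun_eq_0_on_connected[OF holomorphic[OF f] open_domain connected_domain _
          zero_in_domain] vanishes_outside[OF f] by (cases "z \<in> \<Omega>") auto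
    then show False using \<open>f \<noteq> 0\<close> by auto
  qed
  then show "(deriv ^^ ord0 f) f 0 \<noteq> 0" unfolding ord0_def by (rule LeastI_ex)
  show "vanishes_to (ord0 f) f"
    unfolding vanishes_to_def ord0_def using not_less_Least by blast
qed

section \<open>Inner functions\<close>

lemma ip_proj_rkernel:
  assumes f: "f \<in> H" and v: "v \<in> cyclic H ip f"
  shows "ip v (proj ip (cyclic H ip f) (rkernel H ip d 0)) = (deriv ^^ d) v 0"
proof -
  have k: "rkernel H ip d 0 \<in> H" "\<forall>h\<in>H. ip h (rkernel H ip d 0) = (deriv ^^ d) h 0"
    using rkernel_reproduces[OF zero_in_domain] by auto
  have "v \<in> H" using v cyclic_subset_H by auto
  then show ?thesis using ip_proj[OF closed_hsubspace_cyclic[OF f] k(1) v] k(2) by simp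
qed

lemma proj_rkernel_in_cyclic:
  "f \<in> H \<Longrightarrow> proj ip (cyclic H ip f) (rkernel H ip d 0) \<in> cyclic H ip f"
  using proj_characterization[OF closed_hsubspace_cyclic
      rkernel_reproduces[OF zero_in_domain, THEN conjunct1]] by blast

lemma proj_rkernel_orthogonal_shifts:
  assumes f: "f \<in> H" "vanishes_to d f" and q: "q \<in> cyclic H ip f" and k: "k \<ge> 1"
  shows "ip (proj ip (cyclic H ip f) (rkernel H ip d 0)) (\<lambda>z. z ^ k * q z) = 0"
proof -
  define g where "g = proj ip (cyclic H ip f) (rkernel H ip d 0)"
  have "g \<in> H" "q \<in> H"
    using proj_rkernel_in_cyclic[OF f(1)] q cyclic_subset_H by (auto simp: g_def)
  have "ip (\<lambda>z. z ^ k * q z) g = (deriv ^^ d) (\<lambda>z. z ^ k * q z) 0"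
    unfolding g_def by (rule ip_proj_rkernel[OF f(1) cyclic_mult_power[OF f(1) q]])
  also have "\<dots> = 0"
    by (rule higher_deriv_mult_power_eq_0[OF \<open>q \<in> H\<close> cyclic_vanishes_to[OF f q] k])
  finally show ?thesis
    using ip_commute[OF mult_power_in[OF \<open>q \<in> H\<close>] \<open>g \<in> H\<close>] by (simp add: g_def)
qed

lemma proj_rkernel_nonzero:
  assumes f: "f \<in> H" and d: "(deriv ^^ d) f 0 \<noteq> 0"
  shows "proj ip (cyclic H ip f) (rkernel H ip d 0) \<noteq> 0"
proof
  assume "proj ip (cyclic H ip f) (rkernel H ip d 0) = 0"
  then have "ip f (proj ip (cyclic H ip f) (rkernel H ip d 0)) = 0" using f by simp
  then show False using ip_proj_rkernel[OF f in_cyclic_self[OF f]] d by simp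
qed

lemma H_inner_proj_rkernel:
  assumes f: "f \<in> H" "f \<noteq> 0"
  shows "H_inner H ip (proj ip (cyclic H ip f) (rkernel H ip (ord0 f) 0))"
proof -
  define g where "g = proj ip (cyclic H ip f) (rkernel H ip (ord0 f) 0)"
  have "g \<in> cyclic H ip f" unfolding g_def by (rule proj_rkernel_in_cyclic[OF f(1)])
  then show ?thesis
    using proj_rkernel_orthogonal_shifts[OF f(1) ord0_props(2)[OF f]] cyclic_subset_H
      proj_rkernel_nonzero[OF f(1) ord0_props(1)[OF f]]
    by (auto simp: H_inner_def g_def)
qed

lemma H_inner_smul:
  assumes g: "H_inner H ip g" and c: "c \<noteq> 0" shows "H_inner H ip (smul c g)"
proof -
  have gH: "g \<in> H" and "g \<noteq> 0" and orth: "\<And>k. k \<ge> 1 \<Longrightarrow> ip g (\<lambda>z. z ^ k * g z) = 0"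
    using g by (auto simp: H_inner_def)
  have "smul c g \<noteq> 0" using c \<open>g \<noteq> 0\<close> by (auto simp: smul_def fun_eq_iff)
  moreover have "(\<lambda>z. z ^ k * smul c g z) = smul c (\<lambda>z. z ^ k * g z)" for k
    by (simp add: smul_def fun_eq_iff algebra_simps)
  ultimately show ?thesis
    using gH mult_power_in[OF gH] orth by (simp add: H_inner_def ip_smul ip_smul_right)
qed

lemma H_inner_eq_smul:
  assumes f: "H_inner H ip f" and g: "g \<in> cyclic H ip f" "g \<noteq> 0"
    and orth: "\<And>k. k \<ge> 1 \<Longrightarrow> ip g (\<lambda>z. z ^ k * f z) = 0"
  shows "\<exists>c. c \<noteq> 0 \<and> f = smul c g"
proof -
  have fH: "f \<in> H" and "f \<noteq> 0" and f_orth: "\<And>k. k \<ge> 1 \<Longrightarrow> ip f (\<lambda>z. z ^ k * f z) = 0"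
    using f by (auto simp: H_inner_def)
  have gH: "g \<in> H" using g cyclic_subset_H by auto
  have "ip f f \<noteq> 0" using ip_self_eq_0 fH \<open>f \<noteq> 0\<close> by blast
  define \<alpha> where "\<alpha> = ip g f / ip f f"
  define h where "h = g - smul \<alpha> f"
  have V: "hsubspace (cyclic H ip f)"
    using closed_hsubspace_cyclic[OF fH] by (simp add: closed_hsubspace_def)
  then have "smul \<alpha> f \<in> cyclic H ip f" using in_cyclic_self[OF fH] by (simp add: hsubspace_def)
  then have "h \<in> cyclic H ip f" unfolding h_def by (rule hsubspace_diff[OF V g(1)])
  moreover have "ip h (\<lambda>z. z ^ k * f z) = 0" for k
  proof (cases "k = 0")
    case True
    then show ?thesis using fH gH \<open>ip f f \<noteq> 0\<close> by (simp add: h_def \<alpha>_def ip_diff ip_smul)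
  next
    case False
    then show ?thesis using fH gH orth f_orth mult_power_in[OF fH] by (simp add: h_def ip_diff ip_smul)
  qed
  ultimately have "h = 0" by (rule cyclic_orthogonal_eq_0[OF fH])
  then have "g = smul \<alpha> f" by (simp add: h_def)
  have "\<alpha> \<noteq> 0"
  proof
    assume "\<alpha> = 0"
    then have "g = 0" using \<open>g = smul \<alpha> f\<close> by (simp add: smul_def zero_fun_def)
    then show False using g(2) by blast
  qed
  moreover have "f = smul (1 / \<alpha>) g"
    using \<open>g = smul \<alpha> f\<close> \<open>\<alpha> \<noteq> 0\<close> by (simp add: smul_def fun_eq_iff)
  ultimately show ?thesis by (intro exI[of _ "1 / \<alpha>"]) simp
qed

end

theorem mainTheorem1:
  assumes "rkhs_setting \<Omega> H ip" and "f \<in> H" and "f \<noteq> 0"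
  shows "(H_inner H ip f \<longleftrightarrow>
           (\<exists>c. c \<noteq> 0 \<and> f = smul c (proj ip (cyclic H ip f) (rkernel H ip (ord0 f) 0))))
         \<and> H_inner H ip (proj ip (cyclic H ip f) (rkernel H ip (ord0 f) 0))"
proof -
  interpret rkhs \<Omega> H ip by (rule rkhs_setting_imp_rkhs[OF assms(1)])
  define g where "g = proj ip (cyclic H ip f) (rkernel H ip (ord0 f) 0)"
  have g_inner: "H_inner H ip g"
    unfolding g_def by (rule H_inner_proj_rkernel[OF assms(2,3)])
  have "g \<in> cyclic H ip f" unfolding g_def by (rule proj_rkernel_in_cyclic[OF assms(2)])
  moreover have "ip g (\<lambda>z. z ^ k * f z) = 0" if "k \<ge> 1" for k
    unfolding g_def
    by (rule proj_rkernel_orthogonal_shifts[OF assms(2) ord0_props(2)[OF assms(2,3)]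
          in_cyclic_self[OF assms(2)] that])
  moreover have "g \<noteq> 0" using g_inner by (simp add: H_inner_def)
  ultimately have "H_inner H ip f \<Longrightarrow> \<exists>c. c \<noteq> 0 \<and> f = smul c g"
    using H_inner_eq_smul by blast
  moreover have "H_inner H ip f" if "c \<noteq> 0" "f = smul c g" for c
    using H_inner_smul[OF g_inner that(1)] that(2) by simp
  ultimately show ?thesis using g_inner unfolding g_def by blast
qed

end
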